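(* Consider the multicast coalitional game with player set $\mathcal{N}$ and value function $$v(S)=\sum_{i\in S}U_i-\sum_{i\in S}\frac{\alpha_i}{R_S}-\frac{\beta+\gamma}{R_S},\qquad R_S=\min_{i\in S}R_i,$$ for nonempty $S\subseteq\mathcal{N}$, with the convention $v(\emptyset)=0$. Let $\mathbf{P}=\{P_1,\dots,P_n\}$ be a partition of $\mathcal{N}$ into nonempty sets, with $R_{i,min}$, $R_{i,max}$ the minimum and maximum rates of users in $P_i$, ordered as $R_{1,min}\le R_{1,max}\le R_{2,min}\le\dots\le R_{n,min}\le R_{n,max}$. Let $\alpha_{min}=\min_{i\in\mathcal{N}}\alpha_i$. If $$\frac{R_{i+1,min}}{R_{i,max}}\ge\frac{\alpha_{min}+\beta+\gamma}{\alpha_{min}}\quad\forall i\in\{1,\dots,n-1\},$$ then for every $\mathbf{P}$-incompatible coalition $S$ (i.e. nonempty $S\subseteq\mathcal{N}$ with $S\not\subseteq P_i$ for all $i$), $$\sum_{i=1}^nv(S\cap P_i)\ge v(S).$$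
   Context: A transmitter multicasts a file of size $X>0$ bits to users $\mathcal{N}=\{1,\dots,N\}$. User $i$ has valuation $U_i\in\mathbb{R}$, downloads at rate $R_i>0$, and consumes receive power $P_{Rx,i}>0$; the transmitter transmits at power $P_{Tx}>0$. Costs per unit energy are $a>0$ at users and $b>0$ at the transmitter; bandwidth cost per second is $w>0$. Set $\alpha_i=aP_{Rx,i}X$, $\beta=bP_{Tx}X$, $\gamma=wX$. *)

theory Defs
  imports "HOL-Analysis.Analysis"
begin

definition coal_rate :: "(nat \<Rightarrow> real) \<Rightarrow> nat set \<Rightarrow> real" where
  "coal_rate R S = Min (R ` S)"

(* Value function of the multicast game; alpha i = a * PRx i * X,
   beta = b * PTx * X, gamma = w * X; v {} = 0 *)
definition mval :: "(nat \<Rightarrow> real) \<Rightarrow> (nat \<Rightarrow> real) \<Rightarrow> (nat \<Rightarrow> real) \<Rightarrow> real \<Rightarrow> real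
                    \<Rightarrow> nat set \<Rightarrow> real" where
  "mval U R alpha beta gamma S =
     (if S = {} then 0
      else (\<Sum>i\<in>S. U i) - (\<Sum>i\<in>S. alpha i / coal_rate R S) - (beta + gamma) / coal_rate R S)"

end

theory Submission
  imports Defs
begin

(* Write v(T) = sum U T - coal_cost T, where coal_cost T = (sum alpha T + beta + gamma) / R_T.
   Let k be the first part met by S; then R_S <= r_k, the least rate in S \<inter> P_k.  Every other
   nonempty part S \<inter> P_i lies beyond the rate gap after P_k, so with A_i = sum alpha (S \<inter> P_i)
   and c = beta + gamma,
     r_i / r_k >= (alpha_min + c) / alpha_min >= (A_i + c) / A_i,
   i.e. (A_i + c) / r_i <= A_i / r_k: the higher rate of S \<inter> P_i pays for its own overhead c.
   Summing over the parts, the split costs are at most (sum alpha S + c) / r_k, which is at most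
   the cost of S. *)

definition coal_cost :: "(nat \<Rightarrow> real) \<Rightarrow> (nat \<Rightarrow> real) \<Rightarrow> real \<Rightarrow> nat set \<Rightarrow> real" where
  "coal_cost R alpha c S = (if S = {} then 0 else (sum alpha S + c) / coal_rate R S)"

lemma mval_eq_sum_minus_coal_cost:
  "mval U R alpha beta gamma S = sum U S - coal_cost R alpha (beta + gamma) S"
  by (simp add: mval_def coal_cost_def sum_divide_distrib[symmetric] add_divide_distrib)

lemma coal_rate_pos:
  assumes "finite S" "S \<noteq> {}" "\<And>x. x \<in> S \<Longrightarrow> 0 < R x"
  shows "0 < coal_rate R S"
  using assms by (simp add: coal_rate_def)

lemma coal_rate_antimono:
  assumes "finite S" "T \<noteq> {}" "T \<subseteq> S"
  shows "coal_rate R S \<le> coal_rate R T"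
  unfolding coal_rate_def using assms by (intro Min_antimono) auto

lemma sum_coal_cost_le:
  fixes T :: "nat \<Rightarrow> nat set"
  assumes I: "finite I" "k \<in> I" and fin: "\<And>i. i \<in> I \<Longrightarrow> finite (T i)"
    and disj: "\<forall>i\<in>I. \<forall>j\<in>I. i \<noteq> j \<longrightarrow> T i \<inter> T j = {}"
    and Tk: "T k \<noteq> {}"
    and R_pos: "\<And>x. x \<in> (\<Union>i\<in>I. T i) \<Longrightarrow> 0 < R x"
    and alpha_nonneg: "\<And>x. x \<in> (\<Union>i\<in>I. T i) \<Longrightarrow> 0 \<le> alpha x"
    and c: "0 \<le> c"
    and sep: "\<And>i. i \<in> I - {k} \<Longrightarrow> T i \<noteq> {} \<Longrightarrow>
                coal_cost R alpha c (T i) \<le> sum alpha (T i) / coal_rate R (T k)"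
  shows "(\<Sum>i\<in>I. coal_cost R alpha c (T i)) \<le> coal_cost R alpha c (\<Union>i\<in>I. T i)"
proof -
  let ?A = "\<lambda>i. sum alpha (T i)" and ?r = "coal_rate R (T k)" and ?U = "\<Union>i\<in>I. T i"
  have U_fin: "finite ?U" and U_ne: "?U \<noteq> {}" using I fin Tk by auto
  have sum_U: "sum alpha ?U = (\<Sum>i\<in>I. ?A i)"
    using I fin disj by (simp add: sum.UNION_disjoint)
  have rU_pos: "0 < coal_rate R ?U" using U_fin U_ne R_pos by (rule coal_rate_pos)
  have rU_le: "coal_rate R ?U \<le> ?r" using U_fin Tk I(2) by (intro coal_rate_antimono) auto
  have "(\<Sum>i\<in>I. coal_cost R alpha c (T i))
        = coal_cost R alpha c (T k) + (\<Sum>i\<in>I - {k}. coal_cost R alpha c (T i))"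
    using I by (simp add: sum.remove)
  also have "\<dots> \<le> (?A k + c) / ?r + (\<Sum>i\<in>I - {k}. ?A i / ?r)"
    using Tk sep by (intro add_mono sum_mono) (auto simp: coal_cost_def)
  also have "\<dots> = (sum alpha ?U + c) / ?r"
    using I by (simp add: sum_U sum.remove sum_divide_distrib[symmetric] add_divide_distrib)
  also have "\<dots> \<le> (sum alpha ?U + c) / coal_rate R ?U"
    using alpha_nonneg c rU_pos rU_le
    by (intro divide_left_mono add_nonneg_nonneg sum_nonneg) auto
  finally show ?thesis using U_ne by (simp add: coal_cost_def)
qed

lemma mval_UN_le_sum:
  fixes T :: "nat \<Rightarrow> nat set"
  assumes I: "finite I" "k \<in> I" and fin: "\<And>i. i \<in> I \<Longrightarrow> finite (T i)"
    and disj: "\<forall>i\<in>I. \<forall>j\<in>I. i \<noteq> j \<longrightarrow> T i \<inter> T j = {}"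
    and Tk: "T k \<noteq> {}"
    and R_pos: "\<And>x. x \<in> (\<Union>i\<in>I. T i) \<Longrightarrow> 0 < R x"
    and alpha_nonneg: "\<And>x. x \<in> (\<Union>i\<in>I. T i) \<Longrightarrow> 0 \<le> alpha x"
    and c: "0 \<le> beta + gamma"
    and sep: "\<And>i. i \<in> I - {k} \<Longrightarrow> T i \<noteq> {} \<Longrightarrow>
                coal_cost R alpha (beta + gamma) (T i) \<le> sum alpha (T i) / coal_rate R (T k)"
  shows "mval U R alpha beta gamma (\<Union>i\<in>I. T i) \<le> (\<Sum>i\<in>I. mval U R alpha beta gamma (T i))"
proof -
  have "sum U (\<Union>i\<in>I. T i) = (\<Sum>i\<in>I. sum U (T i))"
    using I fin disj by (simp add: sum.UNION_disjoint)
  then show ?thesis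
    using sum_coal_cost_le[OF assms]
    by (simp add: mval_eq_sum_minus_coal_cost sum_subtractf)
qed

lemma overhead_ratio_le:
  fixes A A\<^sub>0 c r r' :: real
  assumes "0 < A\<^sub>0" "A\<^sub>0 \<le> A" "0 \<le> c" "0 < r" "0 < r'"
    and "(A\<^sub>0 + c) / A\<^sub>0 \<le> r' / r"
  shows "(A + c) / r' \<le> A / r"
proof -
  have "(A + c) / A \<le> (A\<^sub>0 + c) / A\<^sub>0"
    using assms(1-3) mult_right_mono[of A\<^sub>0 A c] by (simp add: field_simps)
  with assms(6) have "(A + c) / A \<le> r' / r" by linarith
  with assms(1,2,4,5) show ?thesis by (simp add: field_simps)
qed

lemma chain_Min_image_mono:
  fixes f :: "'a \<Rightarrow> 'b::linorder" and P :: "nat \<Rightarrow> 'a set" and n i j :: nat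
  assumes fin: "\<And>i. i \<in> {1..n} \<Longrightarrow> finite (P i)"
    and ne: "\<And>i. i \<in> {1..n} \<Longrightarrow> P i \<noteq> {}"
    and chain: "\<And>i. i \<in> {1..n-1} \<Longrightarrow> Max (f ` P i) \<le> Min (f ` P (i+1))"
    and ij: "1 \<le> j" "j \<le> i" "i \<le> n"
  shows "Min (f ` P j) \<le> Min (f ` P i)"
  using ij(2,3)
proof (induction i rule: dec_induct)
  case (step m)
  have m: "m \<in> {1..n}" "m \<in> {1..n-1}" using ij(1) step by auto
  have "Min (f ` P j) \<le> Min (f ` P m)" using step by simp
  also have "\<dots> \<le> Max (f ` P m)" using fin[OF m(1)] ne[OF m(1)] by (simp add: Min_le_iff)
  also have "\<dots> \<le> Min (f ` P (Suc m))" using chain[OF m(2)] by simp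
  finally show ?case .
qed simp

lemma gap_le_coal_rate_ratio:
  fixes P :: "nat \<Rightarrow> nat set" and n k i :: nat
  assumes fin: "\<And>i. i \<in> {1..n} \<Longrightarrow> finite (P i)"
    and ne: "\<And>i. i \<in> {1..n} \<Longrightarrow> P i \<noteq> {}"
    and chain: "\<And>i. i \<in> {1..n-1} \<Longrightarrow> Max (R ` P i) \<le> Min (R ` P (i+1))"
    and ki: "1 \<le> k" "k < i" "i \<le> n"
    and T: "T \<subseteq> P k" "T \<noteq> {}" and T': "T' \<subseteq> P i" "T' \<noteq> {}"
    and R_pos: "\<And>x. x \<in> T \<union> T' \<Longrightarrow> 0 < R x"
  shows "Min (R ` P (k+1)) / Max (R ` P k) \<le> coal_rate R T' / coal_rate R T"
proof (rule frac_le)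
  have k: "k \<in> {1..n}" and i: "i \<in> {1..n}" using ki by auto
  have T_fin: "finite T" and T'_fin: "finite T'"
    using T T' fin[OF k] fin[OF i] finite_subset by auto
  show "0 \<le> coal_rate R T'" "0 < coal_rate R T"
    using coal_rate_pos[OF T_fin T(2), of R] coal_rate_pos[OF T'_fin T'(2), of R] R_pos by auto
  have "Min (R ` P (k+1)) \<le> Min (R ` P i)"
    using ki by (intro chain_Min_image_mono[of n P R, OF fin ne chain]) auto
  also have "\<dots> \<le> coal_rate R T'"
    unfolding coal_rate_def using fin[OF i] T' by (intro Min_antimono) auto
  finally show "Min (R ` P (k+1)) \<le> coal_rate R T'" .
  have "coal_rate R T \<le> Max (R ` T)" using T_fin T(2) by (simp add: coal_rate_def Min_le_iff)
  also have "\<dots> \<le> Max (R ` P k)" using fin[OF k] T by (intro Max_mono) auto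
  finally show "coal_rate R T \<le> Max (R ` P k)" .
qed

lemma coal_cost_le_across_gap:
  fixes P :: "nat \<Rightarrow> nat set" and n k i :: nat
  assumes fin: "\<And>i. i \<in> {1..n} \<Longrightarrow> finite (P i)"
    and ne: "\<And>i. i \<in> {1..n} \<Longrightarrow> P i \<noteq> {}"
    and chain: "\<And>i. i \<in> {1..n-1} \<Longrightarrow> Max (R ` P i) \<le> Min (R ` P (i+1))"
    and ki: "1 \<le> k" "k < i" "i \<le> n"
    and T: "T \<subseteq> P k" "T \<noteq> {}" and T': "T' \<subseteq> P i" "T' \<noteq> {}"
    and R_pos: "\<And>x. x \<in> T \<union> T' \<Longrightarrow> 0 < R x"
    and A\<^sub>0: "0 < A\<^sub>0" "\<And>x. x \<in> T' \<Longrightarrow> A\<^sub>0 \<le> alpha x" and c: "0 \<le> c"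
    and gap: "(A\<^sub>0 + c) / A\<^sub>0 \<le> Min (R ` P (k+1)) / Max (R ` P k)"
  shows "coal_cost R alpha c T' \<le> sum alpha T' / coal_rate R T"
proof -
  have T_fin: "finite T" and T'_fin: "finite T'"
    using T T' fin[of k] fin[of i] ki finite_subset by auto
  obtain x where x: "x \<in> T'" using T' by blast
  have "0 \<le> alpha y" if "y \<in> T'" for y using A\<^sub>0 that by (meson less_imp_le order.trans)
  then have "A\<^sub>0 \<le> sum alpha T'"
    using A\<^sub>0(2)[OF x] T'_fin x by (intro order.trans[OF _ member_le_sum[of x]]) auto
  moreover have "(A\<^sub>0 + c) / A\<^sub>0 \<le> coal_rate R T' / coal_rate R T"
    using gap gap_le_coal_rate_ratio[OF fin ne chain ki T T' R_pos] by linarith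
  ultimately show ?thesis
    using A\<^sub>0(1) c T'(2) coal_rate_pos[OF T_fin T(2), of R] coal_rate_pos[OF T'_fin T'(2), of R] R_pos
    by (auto simp: coal_cost_def intro!: overhead_ratio_le)
qed

theorem lemma1:
  fixes N n :: nat
    and X PTx a b w :: real
    and U R PRx :: "nat \<Rightarrow> real"
    and P :: "nat \<Rightarrow> nat set"
    and S :: "nat set"
  assumes X_pos: "X > 0" and PTx_pos: "PTx > 0"
    and a_pos: "a > 0" and b_pos: "b > 0" and w_pos: "w > 0"
    and R_pos: "\<And>i. i \<in> {1..N} \<Longrightarrow> R i > 0"
    and PRx_pos: "\<And>i. i \<in> {1..N} \<Longrightarrow> PRx i > 0"
    and P_nonempty: "\<And>i. i \<in> {1..n} \<Longrightarrow> P i \<noteq> {}"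
    and P_disj: "\<And>i j. i \<in> {1..n} \<Longrightarrow> j \<in> {1..n} \<Longrightarrow> i \<noteq> j \<Longrightarrow> P i \<inter> P j = {}"
    and P_cover: "(\<Union>i\<in>{1..n}. P i) = {1..N}"
    and P_order: "\<And>i. i \<in> {1..n-1} \<Longrightarrow> Max (R ` P i) \<le> Min (R ` P (i+1))"
    and gap: "\<And>i. i \<in> {1..n-1} \<Longrightarrow>
        Min (R ` P (i+1)) / Max (R ` P i) \<ge>
        (Min ((\<lambda>j. a * PRx j * X) ` {1..N}) + b * PTx * X + w * X)
          / Min ((\<lambda>j. a * PRx j * X) ` {1..N})"
    and S_nonempty: "S \<noteq> {}" and S_sub: "S \<subseteq> {1..N}"
    and S_incompat: "\<forall>i\<in>{1..n}. \<not> S \<subseteq> P i"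
  shows "(\<Sum>i=1..n. mval U R (\<lambda>j. a * PRx j * X) (b * PTx * X) (w * X) (S \<inter> P i))
           \<ge> mval U R (\<lambda>j. a * PRx j * X) (b * PTx * X) (w * X) S"
proof -
  define alpha where "alpha = (\<lambda>j. a * PRx j * X)"
  define alpha_min where "alpha_min = Min (alpha ` {1..N})"
  define c where "c = b * PTx * X + w * X"
  have P_fin: "finite (P i)" if "i \<in> {1..n}" for i
    using P_cover that finite_subset[of "P i" "{1..N}"] by blast
  have alpha_pos: "0 < alpha j" if "j \<in> {1..N}" for j
    using that a_pos PRx_pos X_pos by (simp add: alpha_def)
  have c_nonneg: "0 \<le> c" using b_pos PTx_pos w_pos X_pos by (simp add: c_def)
  have alpha_min_pos: "0 < alpha_min"
    using S_nonempty S_sub alpha_pos by (auto simp: alpha_min_def Min_gr_iff)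
  have S_parts: "S = (\<Union>i\<in>{1..n}. S \<inter> P i)" using S_sub P_cover by blast
  have "\<exists>i. i \<in> {1..n} \<and> S \<inter> P i \<noteq> {}" using S_nonempty S_parts by blast
  then have "\<exists>k. (k \<in> {1..n} \<and> S \<inter> P k \<noteq> {}) \<and> (\<forall>i<k. \<not> (i \<in> {1..n} \<and> S \<inter> P i \<noteq> {}))"
    by (rule exists_least_iff[THEN iffD1])
  then obtain k where k: "k \<in> {1..n}" "S \<inter> P k \<noteq> {}"
    and below_k: "\<And>i. i < k \<Longrightarrow> \<not> (i \<in> {1..n} \<and> S \<inter> P i \<noteq> {})"
    by blast
  have sep: "coal_cost R alpha c (S \<inter> P i) \<le> sum alpha (S \<inter> P i) / coal_rate R (S \<inter> P k)"
    if i: "i \<in> {1..n} - {k}" "S \<inter> P i \<noteq> {}" for i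
  proof (rule coal_cost_le_across_gap[where n=n and P=P and R=R, OF P_fin P_nonempty P_order])
    show "k < i" using below_k[of i] i by auto
    then show "(alpha_min + c) / alpha_min \<le> Min (R ` P (k+1)) / Max (R ` P k)"
      using gap[of k] i k by (simp add: alpha_min_def alpha_def c_def add.assoc)
  qed (use i k S_sub R_pos alpha_min_pos c_nonneg in \<open>auto simp: alpha_min_def\<close>)
  have "mval U R alpha (b * PTx * X) (w * X) (\<Union>i\<in>{1..n}. S \<inter> P i)
        \<le> (\<Sum>i\<in>{1..n}. mval U R alpha (b * PTx * X) (w * X) (S \<inter> P i))"
    using k P_fin R_pos alpha_pos S_sub sep c_nonneg P_disj unfolding c_def
    by (intro mval_UN_le_sum[of "{1..n}" k]) (auto simp: less_imp_le disjoint_iff)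
  then show ?thesis using S_parts by (simp add: alpha_def)
qed

end
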